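(* Let $r\ge 3$. There exists an uncountable set of $r$-tuples $(\alpha_1,\dots,\alpha_r)\in\mathbb{R}^r$, each such that $1,\alpha_1,\dots,\alpha_r$ are linearly independent over $\mathbb{Q}$, with the following property: there is a three-dimensional sublattice $\Lambda(\alpha_1,\dots,\alpha_r)$ of $\mathbb{Z}^{r+1}$ such that the best approximations $m_\nu$ (in the sense of linear form) for $(\alpha_1,\dots,\alpha_r)$ lie in $\Lambda(\alpha_1,\dots,\alpha_r)$ for all sufficiently large $\nu$.
   Context: For real $\alpha_1,\dots,\alpha_r$ and $m=(m_0,\dots,m_r)\in\mathbb{Z}^{r+1}\setminus\{0\}$ put $\zeta(m)=|m_0+m_1\alpha_1+\dots+m_r\alpha_r|$ and $M=\max_{0\le j\le r}|m_j|$. A point $m\in\mathbb{Z}^{r+1}\setminus\{0\}$ is a best approximation (in the sense of linear form) if $\zeta(m)=\min\{\zeta(n): n\in\mathbb{Z}^{r+1}\setminus\{0\},\ \max_j|n_j|\le M\}$. The best approximations are ordered as $m_1,m_2,\dots$ so that $\zeta(m_1)>\zeta(m_2)>\dots$ and $M_1<M_2<\dots$, where $M_\nu=\max_j|m_{j,\nu}|$. *)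

theory Defs
  imports Complex_Main "HOL-Library.Countable_Set"
begin

text \<open>Integer vectors in Z^(r+1) are modelled as functions nat => int supported on {0..r};
  tuples (alpha_1,...,alpha_r) as functions nat => real supported on {1..r}.\<close>

definition intvec :: "nat \<Rightarrow> (nat \<Rightarrow> int) set" where
  "intvec r = {m. \<forall>j>r. m j = 0}"

definition realtuple :: "nat \<Rightarrow> (nat \<Rightarrow> real) set" where
  "realtuple r = {\<alpha>. \<forall>i. (i = 0 \<or> i > r) \<longrightarrow> \<alpha> i = 0}"

definition zeta :: "nat \<Rightarrow> (nat \<Rightarrow> real) \<Rightarrow> (nat \<Rightarrow> int) \<Rightarrow> real" where
  "zeta r \<alpha> m = \<bar>real_of_int (m 0) + (\<Sum>j=1..r. real_of_int (m j) * \<alpha> j)\<bar>"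

definition maxnorm :: "nat \<Rightarrow> (nat \<Rightarrow> int) \<Rightarrow> int" where
  "maxnorm r m = Max ((\<lambda>j. \<bar>m j\<bar>) ` {0..r})"

definition best_approx :: "nat \<Rightarrow> (nat \<Rightarrow> real) \<Rightarrow> (nat \<Rightarrow> int) \<Rightarrow> bool" where
  "best_approx r \<alpha> m \<longleftrightarrow> m \<in> intvec r \<and> m \<noteq> (\<lambda>_. 0) \<and>
     (\<forall>n \<in> intvec r. n \<noteq> (\<lambda>_. 0) \<and> maxnorm r n \<le> maxnorm r m \<longrightarrow> zeta r \<alpha> m \<le> zeta r \<alpha> n)"

definition Q_lin_indep :: "nat \<Rightarrow> (nat \<Rightarrow> real) \<Rightarrow> bool" where
  "Q_lin_indep r \<alpha> \<longleftrightarrow> (\<forall>q :: nat \<Rightarrow> real. (\<forall>i\<le>r. q i \<in> \<rat>) \<and>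
      q 0 + (\<Sum>i=1..r. q i * \<alpha> i) = 0 \<longrightarrow> (\<forall>i\<le>r. q i = 0))"

definition lattice_span :: "(nat \<Rightarrow> nat \<Rightarrow> int) \<Rightarrow> (nat \<Rightarrow> int) set" where
  "lattice_span b = {m. \<exists>c :: nat \<Rightarrow> int. m = (\<lambda>j. \<Sum>k<3. c k * b k j)}"

text \<open>b 0, b 1, b 2 are linearly independent vectors of Z^(r+1), so that
  lattice_span b is a three-dimensional sublattice of Z^(r+1).\<close>
definition sublattice3_basis :: "nat \<Rightarrow> (nat \<Rightarrow> nat \<Rightarrow> int) \<Rightarrow> bool" where
  "sublattice3_basis r b \<longleftrightarrow> (\<forall>k<3. b k \<in> intvec r) \<and>
     (\<forall>c :: nat \<Rightarrow> int. (\<forall>j. (\<Sum>k<3. c k * b k j) = 0) \<longrightarrow> (\<forall>k<3. c k = 0))"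

end

theory Submission
  imports Defs
begin

(* Take alpha_j = sum_l d_j(l) / L_l with L_(l+1) = L_l^(r+3) and digits chosen as follows:
   d_1 vanishes at even levels and is 1 or 2 at level 2k+1 according as k is in S (S ranges
   over all sets of naturals, giving uncountably many tuples), d_2 is the indicator of the even
   levels, and d_j(l) = K_l^(j-2) for j >= 3, where K_(l+1) = 8 L_l
   (L_l = den r l, K_l = radix r l, d_j(l) = digit r S j l below).
   At every level t+1 one of alpha_1, alpha_2 has digit 0, so L_t alpha_i is within
   4 L_t / L_(t+2) of an integer. Conversely, if |m_j| <= L_(t+1) and m_j <> 0 for some j >= 3,
   then sum_j m_j d_j(t+2) is a base-K_(t+2) expansion with small digits, hence at least
   5 L_(t+1) in absolute value, and this forces |m_0 + sum_j m_j alpha_j| > 4 L_t / L_(t+2).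
   So a best approximation of norm in [L_t, L_(t+1)) has m_3 = ... = m_r = 0, i.e. lies in the
   lattice spanned by the first three unit vectors. The same lower bound, used at levels of
   suitable parity, shows that 1, alpha_1, ..., alpha_r are linearly independent over Q. *)

lemma summable_tail_le_halving:
  fixes g b :: "nat \<Rightarrow> real"
  assumes g_le: "\<And>l. \<bar>g l\<bar> \<le> b l" and halving: "\<And>l. b (Suc l) \<le> b l / 2"
  shows "summable g" "\<bar>\<Sum>k. g (k + T)\<bar> \<le> 2 * b T"
proof -
  have geometric: "b (k + T) \<le> b T * (1/2) ^ k" for k
  proof (induction k)
    case (Suc k)
    then show ?case using halving[of "k + T"] by simp
  qed simp
  have geometric_sums: "(\<lambda>k. b T * (1/2) ^ k) sums (b T * 2)"
    using sums_mult[OF geometric_sums[of "1/2 :: real"], of "b T"] by simp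
  have tail_le: "norm (g (k + T)) \<le> b T * (1/2) ^ k" for k
    using g_le[of "k + T"] geometric[of k] by simp
  have "summable (\<lambda>k. g (k + T))"
    by (rule summable_comparison_test'[OF sums_summable[OF geometric_sums] tail_le])
  then show "summable g" by simp
  show "\<bar>\<Sum>k. g (k + T)\<bar> \<le> 2 * b T"
    using norm_suminf_le[OF tail_le sums_summable[OF geometric_sums]] sums_unique[OF geometric_sums]
    by simp
qed

lemma suminf_shift_split_head:
  fixes g :: "nat \<Rightarrow> real"
  assumes "summable g"
  shows "(\<Sum>k. g (k + n)) = g n + (\<Sum>k. g (k + Suc n))"
  using assms suminf_split_head[of "\<lambda>k. g (k + n)"] by simp

lemma suminf_ne_0_if_leading_term_dominates:
  fixes g :: "nat \<Rightarrow> real"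
  assumes "summable g" and "\<forall>l<N. g l = 0" and "\<bar>\<Sum>k. g (k + Suc N)\<bar> < \<bar>g N\<bar>"
  shows "suminf g \<noteq> 0"
  using suminf_split_initial_segment[OF assms(1), of N] suminf_shift_split_head[OF assms(1), of N]
    assms(2,3) by auto

lemma sum_divide_dvd_denominators:
  fixes u :: "nat \<Rightarrow> int" and L :: "nat \<Rightarrow> nat"
  assumes "D \<noteq> 0" and "\<And>l. l < n \<Longrightarrow> L l dvd D"
  shows "(\<Sum>l<n. u l / L l) = (\<Sum>l<n. u l * int (D div L l)) / real D"
proof -
  have "u l / L l = u l * int (D div L l) / real D" if "l < n" for l
  proof -
    have "L l dvd D" using assms(2) that .
    moreover have "L l \<noteq> 0" using calculation assms(1) by auto
    ultimately show ?thesis using assms(1) by (simp add: real_of_nat_div)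
  qed
  then show ?thesis by (simp add: sum_divide_distrib)
qed

lemma exists_bracketing_index:
  fixes f :: "nat \<Rightarrow> 'a :: linorder"
  assumes "f 0 \<le> x" and "x < f n"
  shows "\<exists>t. f t \<le> x \<and> x < f (Suc t)"
  using assms(2)
proof (induction n)
  case (Suc n)
  then show ?case by (cases "x < f n") (auto simp: not_less)
qed (use assms(1) in simp)

lemma radix_expansion_eq_0:
  fixes c :: "nat \<Rightarrow> int"
  assumes "\<And>i. i < n \<Longrightarrow> \<bar>c i\<bar> < K" and "(\<Sum>i<n. c i * K ^ i) = 0"
  shows "\<forall>i<n. c i = 0"
  using assms
proof (induction n arbitrary: c)
  case (Suc n)
  have expand: "(\<Sum>i<Suc n. c i * K ^ i) = c 0 + K * (\<Sum>i<n. c (Suc i) * K ^ i)"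
    by (subst sum.lessThan_Suc_shift) (simp add: sum_distrib_left algebra_simps)
  have K_pos: "0 < K" using Suc.prems(1)[of 0] by simp
  have "K dvd c 0"
    using Suc.prems(2) expand by (metis add.commute add_eq_0_iff dvd_minus_iff dvd_triv_left)
  then have c0: "c 0 = 0" using Suc.prems(1)[of 0] dvd_imp_le_int by force
  then have "(\<Sum>i<n. c (Suc i) * K ^ i) = 0" using Suc.prems(2) expand K_pos by simp
  then have "\<forall>i<n. c (Suc i) = 0" using Suc.prems(1) by (intro Suc.IH) auto
  with c0 show ?case by (auto simp: less_Suc_eq_0_disj)
qed simp

lemma Rats_common_denominator:
  fixes q :: "'a \<Rightarrow> real"
  assumes "finite I" and "\<forall>i\<in>I. q i \<in> \<rat>"
  shows "\<exists>d :: int. d > 0 \<and> (\<forall>i\<in>I. of_int d * q i \<in> \<int>)"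
  using assms
proof (induction I rule: finite_induct)
  case (insert i I)
  then obtain d :: int where d: "0 < d" "\<forall>i\<in>I. d * q i \<in> \<int>" by auto
  obtain a b :: int where ab: "0 < b" "q i = a / b" using insert.prems Rats_cases' by blast
  have "(d * b) * q j \<in> \<int>" if "j \<in> insert i I" for j
  proof (cases "j = i")
    case False
    then have "b * (d * q j) \<in> \<int>" using that d(2) by auto
    then show ?thesis by (simp add: ac_simps)
  qed (use ab in simp)
  then show ?case using d(1) ab(1) by (intro exI[of _ "d * b"]) auto
qed (auto intro: exI[of _ 1])

lemma maxnorm_le_iff: "maxnorm r m \<le> B \<longleftrightarrow> (\<forall>j\<le>r. \<bar>m j\<bar> \<le> B)"
  unfolding maxnorm_def by (subst Max_le_iff) auto

lemma abs_le_maxnorm: "j \<le> r \<Longrightarrow> \<bar>m j\<bar> \<le> maxnorm r m"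
  using maxnorm_le_iff by blast

definition linform :: "nat \<Rightarrow> (nat \<Rightarrow> real) \<Rightarrow> (nat \<Rightarrow> int) \<Rightarrow> real" where
  "linform r \<alpha> m = m 0 + (\<Sum>j=1..r. m j * \<alpha> j)"

lemma zeta_eq_abs_linform: "zeta r \<alpha> m = \<bar>linform r \<alpha> m\<bar>"
  unfolding zeta_def linform_def ..

lemma Q_lin_indep_if_linform_ne_0:
  assumes "\<And>m. \<exists>i\<le>r. m i \<noteq> 0 \<Longrightarrow> linform r \<alpha> m \<noteq> 0"
  shows "Q_lin_indep r \<alpha>"
  unfolding Q_lin_indep_def
proof (rule allI, rule impI)
  fix q :: "nat \<Rightarrow> real"
  assume q: "(\<forall>i\<le>r. q i \<in> \<rat>) \<and> q 0 + (\<Sum>i=1..r. q i * \<alpha> i) = 0"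
  obtain d :: int where d: "d > 0" "\<forall>i\<in>{..r}. d * q i \<in> \<int>"
    using Rats_common_denominator[of "{..r}" q] q by auto
  define m where "m i = \<lfloor>d * q i\<rfloor>" for i
  have m: "m i = d * q i" if "i \<le> r" for i
    using d(2) that unfolding m_def by (auto elim: Ints_cases)
  have "linform r \<alpha> m = d * (q 0 + (\<Sum>i=1..r. q i * \<alpha> i))"
    using m by (simp add: linform_def sum_distrib_left algebra_simps)
  then have "\<forall>i\<le>r. m i = 0" using q assms by auto
  then show "\<forall>i\<le>r. q i = 0" using m d(1) by force
qed

(* All that matters about the starting value is 2 r 8^r + 4 < den r 0 (lemma den_gt). *)
fun den :: "nat \<Rightarrow> nat \<Rightarrow> nat" where
  "den r 0 = 2 * r * 8 ^ r + 5"
| "den r (Suc l) = den r l ^ (r + 3)"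

fun radix :: "nat \<Rightarrow> nat \<Rightarrow> nat" where
  "radix r 0 = 8"
| "radix r (Suc l) = 8 * den r l"

definition digit :: "nat \<Rightarrow> nat set \<Rightarrow> nat \<Rightarrow> nat \<Rightarrow> nat" where
  "digit r S j l =
     (if j = 1 then (if odd l then (if l div 2 \<in> S then 2 else 1) else 0)
      else if j = 2 then (if even l then 1 else 0)
      else radix r l ^ (j - 2))"

definition alpha :: "nat \<Rightarrow> nat set \<Rightarrow> nat \<Rightarrow> real" where
  "alpha r S j = (if j \<in> {1..r} then (\<Sum>l. digit r S j l / den r l) else 0)"

definition digit_sum :: "nat \<Rightarrow> nat set \<Rightarrow> (nat \<Rightarrow> int) \<Rightarrow> nat \<Rightarrow> int" where
  "digit_sum r S m l = (\<Sum>j=1..r. m j * digit r S j l)"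

definition weight :: "nat \<Rightarrow> nat \<Rightarrow> real" where
  "weight r l = radix r l ^ r / den r l"

lemma den_gt: "2 * r * 8 ^ r + 4 < den r l"
proof (induction l)
  case (Suc l)
  then show ?case using self_le_power[of "den r l" "r + 3"] by simp
qed simp

lemma den_pos: "0 < den r l"
  using den_gt[of r l] by linarith

lemma den_dvd:
  assumes "l \<le> l'"
  shows "den r l dvd den r l'"
  using assms
proof (induction rule: dec_induct)
  case (step n)
  then show ?case using dvd_trans[OF _ dvd_power[of "r + 3" "den r n"]] by simp
qed simp

lemma den_mono: "l \<le> l' \<Longrightarrow> den r l \<le> den r l'"
  using den_dvd den_pos by (simp add: dvd_imp_le)

lemma four_den_le_den_Suc: "4 * den r l \<le> den r (Suc l)"
proof -
  have "4 * den r l \<le> den r l ^ 2"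
    using den_gt[of r l] by (simp add: power2_eq_square)
  also have "\<dots> \<le> den r (Suc l)"
    using den_pos[of r l] by (simp add: power_increasing)
  finally show ?thesis .
qed

lemma less_den: "l < den r l"
proof (induction l)
  case (Suc l)
  then show ?case using four_den_le_den_Suc[of r l] by simp
qed (simp add: den_pos)

lemma den_gt_real: "2 * real r * 8 ^ r + 4 < den r l"
proof -
  have "real (2 * r * 8 ^ r + 4) < real (den r l)" using den_gt[of r l] by (simp only: of_nat_less_iff)
  then show ?thesis by simp
qed

lemma weight_Suc: "weight r (Suc l) = 8 ^ r / real (den r l) ^ 3"
  using den_pos[of r l] by (simp add: weight_def power_mult_distrib power_add)

lemma radix_ge: "8 \<le> radix r l"
  using den_pos by (cases l) (simp_all add: Suc_leI)

declare den.simps [simp del] radix.simps [simp del]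

lemma den_growth_bounds:
  fixes r t :: nat
  defines "x \<equiv> real (den r (Suc t))" and "y \<equiv> real (den r (Suc (Suc t)))"
    and "c \<equiv> 2 * real r * 8 ^ r"
  shows "c * x / y ^ 3 < 1 / y" and "4 * real (den r t) / y < 1 / x - c / x ^ 2"
proof -
  have c_x: "c + 4 < x" unfolding c_def x_def by (rule den_gt_real)
  have c_nonneg: "0 \<le> c" unfolding c_def by simp
  have x_ge_1: "1 \<le> x" using c_x c_nonneg by linarith
  have y_eq: "y = x ^ (r + 3)" unfolding x_def y_def by (simp add: den.simps)
  have x_le_y: "x \<le> y" unfolding y_eq using x_ge_1 by (intro self_le_power) auto
  have "c * x < x * x" using c_x x_ge_1 by (intro mult_strict_right_mono) auto
  also have "\<dots> \<le> y * y" using x_le_y x_ge_1 by (intro mult_mono) auto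
  finally show "c * x / y ^ 3 < 1 / y" using x_ge_1 x_le_y by (simp add: field_simps power3_eq_cube)
  have "x ^ 2 * x \<le> y"
    unfolding y_eq using x_ge_1 by (simp add: power_increasing flip: power_Suc2)
  moreover have "real (den r t) \<le> x" unfolding x_def using den_mono[of t "Suc t" r] by simp
  ultimately have "4 * real (den r t) / y \<le> 4 * x / (x ^ 2 * x)"
    using x_ge_1 by (intro frac_le) auto
  also have "\<dots> = 4 / x ^ 2" using x_ge_1 by simp
  also have "\<dots> < (x - c) / x ^ 2" using c_x x_ge_1 by (intro divide_strict_right_mono) auto
  also have "\<dots> = 1 / x - c / x ^ 2" by (simp add: power2_eq_square diff_divide_distrib)
  finally show "4 * real (den r t) / y < 1 / x - c / x ^ 2" .
qed

lemma den_reciprocal_halving: "0 \<le> c \<Longrightarrow> c / den r (Suc l) \<le> c / den r l / 2"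
  using four_den_le_den_Suc[of r l] den_pos[of r l] by (simp add: field_simps mult_left_mono)

lemma digit_sum_split:
  assumes "2 \<le> r"
  shows "digit_sum r S m l = m 1 * digit r S 1 l + m 2 * digit r S 2 l
           + (\<Sum>j=3..r. m j * radix r l ^ (j - 2))"
proof -
  have "{1..r} = insert 1 (insert 2 {3..r})" using assms by auto
  moreover have "(\<Sum>j=3..r. m j * digit r S j l) = (\<Sum>j=3..r. m j * radix r l ^ (j - 2))"
    by (rule sum.cong) (auto simp: digit_def)
  ultimately show ?thesis unfolding digit_sum_def by simp
qed

context
  fixes r :: nat
  assumes r_pos: "0 < r"
begin

lemma weight_halving: "weight r (Suc l) \<le> weight r l / 2"
proof -
  define L where "L = real (den r l)"
  have L_gt: "2 * real r * 8 ^ r + 4 < L" unfolding L_def by (rule den_gt_real)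
  have "2 * 8 ^ r \<le> 2 * real r * 8 ^ r" using r_pos by simp
  also have "\<dots> \<le> L" using L_gt by linarith
  also have "\<dots> \<le> L ^ 2" using den_pos[of r l] unfolding L_def by (intro self_le_power) auto
  finally have "2 * 8 ^ r \<le> L ^ 2" .
  then have "8 ^ r / L ^ 3 \<le> 1 / (2 * L)"
    using den_pos[of r l] unfolding L_def by (simp add: field_simps power3_eq_cube power2_eq_square)
  also have "\<dots> \<le> weight r l / 2"
  proof -
    have "1 \<le> real (radix r l) ^ r" using radix_ge[of r l] by (intro one_le_power) simp
    then show ?thesis using den_pos[of r l] unfolding weight_def L_def by (simp add: field_simps)
  qed
  finally show ?thesis unfolding weight_Suc L_def .
qed

lemma digit_le_radix_pow: "j \<le> r \<Longrightarrow> digit r S j l \<le> radix r l ^ r"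
  using radix_ge[of r l] r_pos
  by (auto simp: digit_def intro: order.trans[OF _ self_le_power] power_increasing)

lemma abs_digit_sum_div_le:
  fixes X :: real
  assumes "\<forall>j\<in>{1..r}. \<bar>m j\<bar> \<le> X"
  shows "\<bar>digit_sum r S m l / den r l\<bar> \<le> r * X * weight r l"
proof -
  have "\<bar>real_of_int (digit_sum r S m l)\<bar> \<le> (\<Sum>j=1..r. \<bar>m j\<bar> * real (digit r S j l))"
    unfolding digit_sum_def of_int_sum of_int_mult by (rule order.trans[OF sum_abs]) (simp add: abs_mult)
  also have "\<dots> \<le> (\<Sum>j=1..r. X * radix r l ^ r)"
  proof -
    have "\<bar>m j\<bar> * real (digit r S j l) \<le> X * radix r l ^ r" if j: "j \<in> {1..r}" for j
    proof -
      have "digit r S j l \<le> radix r l ^ r" using j by (intro digit_le_radix_pow) simp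
      then have "real (digit r S j l) \<le> real (radix r l ^ r)" by (simp only: of_nat_le_iff)
      then show ?thesis using assms j by (intro mult_mono) auto
    qed
    then show ?thesis by (intro sum_mono) simp
  qed
  finally have "\<bar>real_of_int (digit_sum r S m l)\<bar> \<le> r * X * radix r l ^ r" by simp
  then show ?thesis
    using den_pos[of r l] by (simp add: weight_def divide_right_mono)
qed

lemma digit_series_sums:
  assumes "j \<in> {1..r}"
  shows "(\<lambda>l. digit r S j l / den r l) sums alpha r S j"
proof -
  have bound: "\<bar>digit r S j l / den r l\<bar> \<le> weight r l" for l
    using assms digit_le_radix_pow[of j S l] den_pos[of r l]
    by (simp add: weight_def divide_right_mono flip: of_nat_power)
  have "summable (\<lambda>l. digit r S j l / den r l)"
    by (rule summable_tail_le_halving(1)[where b = "weight r"]) (use bound weight_halving in auto)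
  then show ?thesis using assms by (simp add: alpha_def summable_sums)
qed

lemma linform_alpha_sums:
  "(\<lambda>l. digit_sum r S m l / den r l) sums (linform r (alpha r S) m - m 0)"
proof -
  have "(\<lambda>l. \<Sum>j=1..r. m j * (digit r S j l / den r l)) sums (\<Sum>j=1..r. m j * alpha r S j)"
    by (intro sums_sum sums_mult digit_series_sums)
  then show ?thesis by (simp add: linform_def digit_sum_def sum_divide_distrib)
qed

lemma linform_split:
  assumes m_le: "\<forall>j\<in>{1..r}. \<bar>m j\<bar> \<le> den r n"
  obtains A :: int and R where
    "linform r (alpha r S) m = A / den r n + R"
    "\<bar>R\<bar> \<le> 2 * r * 8 ^ r / den r n ^ 2"
    "\<bar>R - digit_sum r S m (Suc n) / den r (Suc n)\<bar> \<le> 2 * r * 8 ^ r * den r n / den r (Suc n) ^ 3"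
proof -
  define X where "X = real (den r n)"
  have X: "\<forall>j\<in>{1..r}. \<bar>real_of_int (m j)\<bar> \<le> X"
    using m_le unfolding X_def by (metis of_int_abs of_int_le_iff of_int_of_nat_eq)
  define g where "g l = digit_sum r S m l / den r l" for l
  have halving: "r * X * weight r (Suc l) \<le> r * X * weight r l / 2" for l
    using mult_left_mono[OF weight_halving, of "r * X" l] unfolding X_def by simp
  have "\<bar>g l\<bar> \<le> r * X * weight r l" for l
    unfolding g_def by (rule abs_digit_sum_div_le[OF X])
  note g = summable_tail_le_halving[of g "\<lambda>l. r * X * weight r l", OF this halving]
  define A where "A = m 0 * den r n + (\<Sum>l<Suc n. digit_sum r S m l * int (den r n div den r l))"
  define R where "R = (\<Sum>k. g (k + Suc n))"
  have "(\<Sum>l<Suc n. g l) = (A - m 0 * den r n) / den r n"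
    unfolding g_def A_def using den_pos den_dvd
    by (subst sum_divide_dvd_denominators[where D = "den r n"]) auto
  then have "(\<Sum>l<Suc n. g l) = A / den r n - m 0"
    using den_pos[of r n] by (simp add: diff_divide_distrib)
  moreover have "linform r (alpha r S) m - m 0 = suminf g"
    using linform_alpha_sums unfolding g_def by (simp add: sums_iff)
  moreover have "suminf g = R + (\<Sum>l<Suc n. g l)"
    unfolding R_def by (rule suminf_split_initial_segment[OF g(1)])
  ultimately have "linform r (alpha r S) m = A / den r n + R" by simp
  moreover have "\<bar>R\<bar> \<le> 2 * r * 8 ^ r / den r n ^ 2"
    using g(2)[of "Suc n"] den_pos[of r n]
    unfolding R_def weight_Suc X_def by (simp add: power2_eq_square power3_eq_cube)
  moreover have "R = g (Suc n) + (\<Sum>k. g (k + Suc (Suc n)))"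
    unfolding R_def by (rule suminf_shift_split_head[OF g(1)])
  then have "\<bar>R - g (Suc n)\<bar> \<le> 2 * r * 8 ^ r * den r n / den r (Suc n) ^ 3"
    using g(2)[of "Suc (Suc n)"] unfolding weight_Suc X_def by (simp add: mult_ac)
  ultimately show ?thesis using that unfolding g_def by blast
qed

lemma abs_linform_gt:
  assumes m_le: "\<forall>j\<in>{1..r}. \<bar>m j\<bar> \<le> den r (Suc t)"
  shows "min (4 * real (den r t)) (\<bar>real_of_int (digit_sum r S m (Suc (Suc t)))\<bar> - 1)
           / den r (Suc (Suc t)) < \<bar>linform r (alpha r S) m\<bar>"
proof -
  define x y u c where "x = real (den r (Suc t))" and "y = real (den r (Suc (Suc t)))"
    and "u = real_of_int (digit_sum r S m (Suc (Suc t)))" and "c = 2 * real r * 8 ^ r"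
  have pos: "0 < x" "0 < y" unfolding x_def y_def using den_pos by simp_all
  note growth = den_growth_bounds[of r t, folded x_def y_def c_def]
  obtain A :: int and R where
    "linform r (alpha r S) m = A / den r (Suc t) + R"
    "\<bar>R\<bar> \<le> 2 * r * 8 ^ r / den r (Suc t) ^ 2"
    "\<bar>R - digit_sum r S m (Suc (Suc t)) / den r (Suc (Suc t))\<bar>
       \<le> 2 * r * 8 ^ r * den r (Suc t) / den r (Suc (Suc t)) ^ 3"
    by (rule linform_split[OF m_le])
  then have split: "linform r (alpha r S) m = A / x + R" and R: "\<bar>R\<bar> \<le> c / x ^ 2"
    and R': "\<bar>R - u / y\<bar> \<le> c * x / y ^ 3"
    unfolding x_def y_def u_def c_def by simp_all
  show ?thesis
  proof (cases "A = 0")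
    case True
    have "\<bar>u\<bar> / y - \<bar>R - u / y\<bar> \<le> \<bar>linform r (alpha r S) m\<bar>"
      using abs_triangle_ineq2[of "u / y" "u / y - R"] pos split True by (simp add: abs_minus_commute)
    then have "(\<bar>u\<bar> - 1) / y < \<bar>linform r (alpha r S) m\<bar>"
      using R' growth(1) by (simp add: diff_divide_distrib)
    moreover have "min (4 * real (den r t)) (\<bar>u\<bar> - 1) / y \<le> (\<bar>u\<bar> - 1) / y"
      using pos by (intro divide_right_mono) auto
    ultimately show ?thesis unfolding u_def y_def by linarith
  next
    case False
    then have "1 / x \<le> \<bar>A / x\<bar>" using pos by (simp add: divide_right_mono)
    moreover have "\<bar>A / x\<bar> - \<bar>R\<bar> \<le> \<bar>linform r (alpha r S) m\<bar>"
      using abs_triangle_ineq2[of "A / x" "- R"] split by simp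
    ultimately have "4 * real (den r t) / y < \<bar>linform r (alpha r S) m\<bar>"
      using R growth(2) by linarith
    moreover have "min (4 * real (den r t)) (\<bar>u\<bar> - 1) / y \<le> 4 * real (den r t) / y"
      using pos by (intro divide_right_mono) auto
    ultimately show ?thesis unfolding u_def y_def by linarith
  qed
qed

lemma digit_sum_high:
  assumes m_le: "\<forall>j\<in>{1..r}. \<bar>m j\<bar> \<le> den r (Suc t)" and j: "3 \<le> j" "j \<le> r" "m j \<noteq> 0"
  shows "5 * int (den r (Suc t)) \<le> \<bar>digit_sum r S m (Suc (Suc t))\<bar>"
proof -
  define x K where "x = int (den r (Suc t))" and "K = int (radix r (Suc (Suc t)))"
  have K_eq: "K = 8 * x" unfolding K_def x_def by (simp add: radix.simps)
  have x_pos: "0 < x" unfolding x_def using den_pos by simp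
  define Z where "Z = (\<Sum>i<r - 2. m (i + 3) * K ^ i)"
  have "(\<Sum>j=3..r. m j * K ^ (j - 2)) = (\<Sum>i<r - 2. m (i + 3) * K ^ (i + 1))"
    by (rule sum.reindex_bij_witness[where i = "\<lambda>i. i + 3" and j = "\<lambda>j. j - 3"])
      (auto simp: numeral_eq_Suc Suc_diff_Suc)
  also have "\<dots> = K * Z" unfolding Z_def by (simp add: sum_distrib_left algebra_simps)
  finally have high: "(\<Sum>j=3..r. m j * K ^ (j - 2)) = K * Z" .
  have "Z \<noteq> 0"
  proof
    assume "Z = 0"
    moreover have "\<bar>m (i + 3)\<bar> < K" if "i < r - 2" for i
    proof -
      have "\<bar>m (i + 3)\<bar> \<le> x" using m_le that unfolding x_def by auto
      then show ?thesis using x_pos unfolding K_eq by linarith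
    qed
    ultimately have "\<forall>i<r - 2. m (i + 3) = 0" unfolding Z_def by (intro radix_expansion_eq_0) auto
    moreover have "j - 3 < r - 2" using j by simp
    ultimately have "m (j - 3 + 3) = 0" by blast
    then show False using j by simp
  qed
  then have "8 * x \<le> \<bar>K * Z\<bar>" using x_pos unfolding K_eq by (simp add: abs_mult)
  moreover have "\<bar>m 1 * digit r S 1 (Suc (Suc t))\<bar> \<le> x * 2"
    using m_le j unfolding abs_mult x_def by (intro mult_mono) (auto simp: digit_def)
  moreover have "\<bar>m 2 * digit r S 2 (Suc (Suc t))\<bar> \<le> x * 1"
    using m_le j unfolding abs_mult x_def by (intro mult_mono) (auto simp: digit_def)
  moreover have "2 \<le> r" using j by simp
  ultimately show ?thesis
    using digit_sum_split[of r S m "Suc (Suc t)"] high unfolding K_def x_def by simp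
qed

lemma den_mult_alpha_near_int:
  assumes i: "i \<in> {1..r}" "\<And>l. digit r S i l \<le> 2" "digit r S i (Suc t) = 0"
  obtains P :: int where "0 \<le> P" "P \<le> den r t"
    "\<bar>den r t * alpha r S i - P\<bar> \<le> 4 * real (den r t) / den r (Suc (Suc t))"
proof -
  define h where "h l = digit r S i l / den r l" for l
  have h_nonneg: "0 \<le> h l" for l unfolding h_def by simp
  have h_le: "\<bar>h l\<bar> \<le> 2 / den r l" for l
    using i(2)[of l] den_pos[of r l] unfolding h_def by (simp add: divide_right_mono)
  have halving: "2 / den r (Suc l) \<le> 2 / den r l / 2" for l by (rule den_reciprocal_halving) simp
  note h = summable_tail_le_halving[of h "\<lambda>l. 2 / den r l", OF h_le halving]
  define P where "P = (\<Sum>l<Suc t. int (digit r S i l) * int (den r t div den r l))"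
  have "\<And>l. l < Suc t \<Longrightarrow> den r l dvd den r t" by (rule den_dvd) simp
  then have partial: "(\<Sum>l<Suc t. h l) = P / den r t"
    using sum_divide_dvd_denominators[of "den r t" "Suc t" "den r" "\<lambda>l. int (digit r S i l)"]
      den_pos[of r t] unfolding h_def P_def by simp
  have "alpha r S i = suminf h" using i(1) unfolding h_def alpha_def by simp
  also have "\<dots> = (\<Sum>k. h (k + Suc t)) + (\<Sum>l<Suc t. h l)"
    by (rule suminf_split_initial_segment[OF h(1)])
  also have "h (Suc t) = 0" using i(3) unfolding h_def by simp
  then have "(\<Sum>k. h (k + Suc t)) = (\<Sum>k. h (k + Suc (Suc t)))"
    using suminf_shift_split_head[OF h(1), of "Suc t"] by simp
  finally have "den r t * alpha r S i - P = den r t * (\<Sum>k. h (k + Suc (Suc t)))"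
    using den_pos[of r t] unfolding partial by (simp add: field_simps)
  also have "\<bar>\<dots>\<bar> \<le> den r t * (4 / den r (Suc (Suc t)))"
    using mult_left_mono[OF h(2)[of "Suc (Suc t)"], of "den r t"] by (simp add: abs_mult)
  finally have approx: "\<bar>den r t * alpha r S i - P\<bar> \<le> 4 * real (den r t) / den r (Suc (Suc t))"
    by (simp add: mult.commute)
  have "(\<Sum>l<Suc t. h l) \<le> suminf h" using h(1) h_nonneg by (intro sum_le_suminf) auto
  also have "\<dots> \<le> 2 * (2 / den r 0)" using h(2)[of 0] by simp
  also have "\<dots> \<le> 1" using den_gt[of r 0] by (simp add: field_simps)
  finally have "P \<le> den r t" "0 \<le> P"
    using sum_nonneg[of "{..<Suc t}" h] h_nonneg den_pos[of r t]
    unfolding partial by (simp_all add: field_simps zero_le_divide_iff)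
  then show ?thesis using that approx by blast
qed

lemma small_linform_at_level:
  assumes "2 \<le> r"
  obtains v where "v \<in> intvec r" "v \<noteq> (\<lambda>_. 0)" "maxnorm r v \<le> den r t"
    "zeta r (alpha r S) v \<le> 4 * real (den r t) / den r (Suc (Suc t))"
proof -
  define i :: nat where "i = (if even t then 2 else 1)"
  have i: "i \<in> {1..r}" "\<And>l. digit r S i l \<le> 2" "digit r S i (Suc t) = 0"
    using assms unfolding i_def digit_def by auto
  then obtain P :: int where P: "0 \<le> P" "P \<le> den r t"
    "\<bar>den r t * alpha r S i - P\<bar> \<le> 4 * real (den r t) / den r (Suc (Suc t))"
    by (rule den_mult_alpha_near_int)
  define v where "v j = (if j = 0 then - P else if j = i then int (den r t) else 0)" for j
  show ?thesis
  proof (rule that)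
    show "v \<in> intvec r" using i unfolding intvec_def v_def by auto
    show "v \<noteq> (\<lambda>_. 0)" using i(1) den_pos[of r t] by (auto simp: v_def fun_eq_iff)
    show "maxnorm r v \<le> den r t" using P unfolding maxnorm_le_iff v_def by auto
    have "(\<Sum>j=1..r. v j * alpha r S j) = (\<Sum>j=1..r. if j = i then den r t * alpha r S j else 0)"
      unfolding v_def by (intro sum.cong) auto
    also have "\<dots> = den r t * alpha r S i" using i(1) by simp
    finally have "linform r (alpha r S) v = den r t * alpha r S i - P"
      unfolding linform_def by (simp add: v_def)
    then show "zeta r (alpha r S) v \<le> 4 * real (den r t) / den r (Suc (Suc t))"
      using P(3) unfolding zeta_eq_abs_linform by simp
  qed
qed

lemma linform_alpha_ne_0_if_digit_sum_ne_0:
  assumes "\<forall>j\<in>{1..r}. \<bar>m j\<bar> \<le> den r (Suc t)" and "digit_sum r S m (Suc (Suc t)) \<noteq> 0"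
  shows "linform r (alpha r S) m \<noteq> 0"
proof -
  have "1 \<le> \<bar>real_of_int (digit_sum r S m (Suc (Suc t)))\<bar>" using assms(2) by linarith
  then have "0 \<le> min (4 * real (den r t)) (\<bar>real_of_int (digit_sum r S m (Suc (Suc t)))\<bar> - 1)
      / den r (Suc (Suc t))" by simp
  then show ?thesis using abs_linform_gt[OF assms(1), of S] by linarith
qed

lemma linform_alpha_ne_0:
  assumes "2 \<le> r" and "\<exists>i\<le>r. m i \<noteq> 0"
  shows "linform r (alpha r S) m \<noteq> 0"
proof -
  define n where "n = nat (maxnorm r m)"
  have m_le: "\<forall>j\<in>{1..r}. \<bar>m j\<bar> \<le> den r (Suc t)" if "n \<le> t" for t
  proof -
    have "maxnorm r m \<le> int n" unfolding n_def by simp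
    also have "\<dots> < int (den r (Suc t))" using that less_den[of "Suc t" r] by simp
    finally show ?thesis using abs_le_maxnorm[of _ r m] by fastforce
  qed
  note ne_0 = linform_alpha_ne_0_if_digit_sum_ne_0[OF m_le]
  have digit_sum_low: "digit_sum r S m l = m 1 * digit r S 1 l + m 2 * digit r S 2 l"
    if "\<forall>j\<in>{3..r}. m j = 0" for l
    using that digit_sum_split[OF assms(1), of S m l] by simp
  consider (high) j where "3 \<le> j" "j \<le> r" "m j \<noteq> 0"
    | (two) "\<forall>j\<in>{3..r}. m j = 0" "m 2 \<noteq> 0"
    | (one) "\<forall>j\<in>{3..r}. m j = 0" "m 1 \<noteq> 0"
    | (zero) "\<forall>j\<in>{1..r}. m j = 0"
    by (metis atLeastAtMost_iff le_antisym not_less_eq_eq numeral_2_eq_2 numeral_3_eq_3 One_nat_def)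
  then show ?thesis
  proof cases
    case high
    then have "5 * int (den r (Suc n)) \<le> \<bar>digit_sum r S m (Suc (Suc n))\<bar>"
      using m_le[of n] by (intro digit_sum_high) auto
    then show ?thesis using den_pos[of r "Suc n"] by (intro ne_0) auto
  next
    case two
    then show ?thesis by (intro ne_0[of "2 * n"]) (auto simp: digit_sum_low digit_def)
  next
    case one
    then show ?thesis by (intro ne_0[of "2 * n + 1"]) (auto simp: digit_sum_low digit_def)
  next
    case zero
    moreover obtain i where "i \<le> r" "m i \<noteq> 0" using assms(2) by blast
    ultimately have "m 0 \<noteq> 0" by (cases i) auto
    then show ?thesis using zero by (simp add: linform_def)
  qed
qed

lemma best_approx_alpha_high_coordinates:
  assumes best: "best_approx r (alpha r S) m" and large: "den r 0 \<le> maxnorm r m" and j: "3 \<le> j"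
  shows "m j = 0"
proof (rule ccontr)
  assume "m j \<noteq> 0"
  have m_intvec: "m \<in> intvec r" using best unfolding best_approx_def by blast
  have best': "zeta r (alpha r S) m \<le> zeta r (alpha r S) v"
    if "v \<in> intvec r" "v \<noteq> (\<lambda>_. 0)" "maxnorm r v \<le> maxnorm r m" for v
    using best that unfolding best_approx_def by blast
  have "j \<le> r"
  proof (rule ccontr)
    assume "\<not> j \<le> r"
    then show False using m_intvec \<open>m j \<noteq> 0\<close> unfolding intvec_def by simp
  qed
  have "maxnorm r m < den r (nat (maxnorm r m))" using less_den[of "nat (maxnorm r m)" r] by linarith
  then obtain t where t: "den r t \<le> maxnorm r m" "maxnorm r m < den r (Suc t)"
    using exists_bracketing_index[of "\<lambda>l. int (den r l)"] large by blast
  have m_le: "\<forall>j\<in>{1..r}. \<bar>m j\<bar> \<le> den r (Suc t)"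
    using abs_le_maxnorm[of _ r m] t(2) by fastforce
  have "5 * int (den r (Suc t)) \<le> \<bar>digit_sum r S m (Suc (Suc t))\<bar>"
    using digit_sum_high[OF m_le j \<open>j \<le> r\<close> \<open>m j \<noteq> 0\<close>] .
  moreover have "4 * den r t + 1 \<le> 5 * den r (Suc t)"
    using den_mono[of t "Suc t" r] den_pos[of r t] by simp
  ultimately have "4 * real (den r t) \<le> \<bar>real_of_int (digit_sum r S m (Suc (Suc t)))\<bar> - 1"
    by linarith
  then have "4 * real (den r t) / den r (Suc (Suc t)) < zeta r (alpha r S) m"
    using abs_linform_gt[OF m_le, of S] unfolding zeta_eq_abs_linform by (simp add: min_def)
  moreover obtain v where "v \<in> intvec r" "v \<noteq> (\<lambda>_. 0)" "maxnorm r v \<le> den r t"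
    "zeta r (alpha r S) v \<le> 4 * real (den r t) / den r (Suc (Suc t))"
    using small_linform_at_level[of t S] j \<open>j \<le> r\<close> by auto
  ultimately show False using best'[of v] t(1) by fastforce
qed

lemma alpha_1_ne_if_first_difference:
  assumes n: "(n \<in> S) \<noteq> (n \<in> S')" and below: "\<And>k. k < n \<Longrightarrow> (k \<in> S) = (k \<in> S')"
  shows "alpha r S 1 \<noteq> alpha r S' 1"
proof -
  define N where "N = 2 * n + 1"
  define g where "g l = (real (digit r S 1 l) - digit r S' 1 l) / den r l" for l
  have g_le: "\<bar>g l\<bar> \<le> 1 / den r l" for l
    using den_pos[of r l] unfolding g_def digit_def by (auto simp: divide_right_mono)
  have halving: "1 / den r (Suc l) \<le> 1 / den r l / 2" for l by (rule den_reciprocal_halving) simp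
  note g = summable_tail_le_halving[of g "\<lambda>l. 1 / den r l", OF g_le halving]
  have "g sums (alpha r S 1 - alpha r S' 1)"
    unfolding g_def diff_divide_distrib using r_pos by (intro sums_diff digit_series_sums) auto
  moreover have "suminf g \<noteq> 0"
  proof (rule suminf_ne_0_if_leading_term_dominates[OF g(1)])
    show "\<forall>l<N. g l = 0"
    proof (intro allI impI)
      fix l assume "l < N"
      show "g l = 0"
      proof (cases "even l")
        case False
        then have "l div 2 < n" using \<open>l < N\<close> unfolding N_def by (auto elim!: oddE)
        then show ?thesis using below[of "l div 2"] False unfolding g_def digit_def by simp
      qed (simp add: g_def digit_def)
    qed
    have "odd N" "N div 2 = n" unfolding N_def by auto
    then have "\<bar>real (digit r S 1 N) - real (digit r S' 1 N)\<bar> = 1"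
      using n unfolding digit_def by auto
    then have "\<bar>g N\<bar> = 1 / den r N" unfolding g_def by simp
    moreover have "2 / den r (Suc N) < 1 / den r N"
      using four_den_le_den_Suc[of r N] den_pos[of r N] by (simp add: field_simps)
    ultimately show "\<bar>\<Sum>k. g (k + Suc N)\<bar> < \<bar>g N\<bar>"
      using g(2)[of "Suc N"] by simp
  qed
  ultimately show ?thesis by (simp add: sums_iff)
qed

lemma inj_alpha: "inj (alpha r)"
proof (rule injI)
  fix S S' assume "alpha r S = alpha r S'"
  show "S = S'"
  proof (rule ccontr)
    assume "S \<noteq> S'"
    define n where "n = (LEAST n. (n \<in> S) \<noteq> (n \<in> S'))"
    have "\<exists>n. (n \<in> S) \<noteq> (n \<in> S')" using \<open>S \<noteq> S'\<close> by blast
    then have "(n \<in> S) \<noteq> (n \<in> S')" unfolding n_def by (rule LeastI_ex)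
    moreover have "(k \<in> S) = (k \<in> S')" if "k < n" for k
      using not_less_Least[OF that[unfolded n_def]] by blast
    ultimately have "alpha r S 1 \<noteq> alpha r S' 1" by (rule alpha_1_ne_if_first_difference)
    then show False using \<open>alpha r S = alpha r S'\<close> by simp
  qed
qed

end

lemma uncountable_UNIV_nat_set: "uncountable (UNIV :: nat set set)"
  using Cantors_theorem[of "UNIV :: nat set"] range_from_nat_into[of "UNIV :: nat set set"]
  by (metis Pow_UNIV UNIV_not_empty)

lemma sublattice3_basis_unit_vectors:
  assumes "2 \<le> r"
  shows "sublattice3_basis r (\<lambda>k j. if j = k then 1 else 0)"
  unfolding sublattice3_basis_def
proof (intro conjI allI impI)
  show "(\<lambda>j. if j = k then 1 else 0) \<in> intvec r" if "k < 3" for k :: nat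
    using assms that unfolding intvec_def by auto
  fix c :: "nat \<Rightarrow> int" and k :: nat
  assume "\<forall>j. (\<Sum>k'<3. c k' * (if j = k' then 1 else 0)) = 0" and "k < 3"
  then have "(\<Sum>k'<3. c k' * (if k = k' then 1 else 0)) = 0" by blast
  moreover have "(\<Sum>k'<3. c k' * (if k = k' then 1 else 0)) = (\<Sum>k'<3. if k = k' then c k' else 0)"
    by (intro sum.cong) auto
  ultimately show "c k = 0" using \<open>k < 3\<close> by simp
qed

lemma lattice_span_unit_vectors:
  assumes "\<forall>j\<ge>3. m j = 0"
  shows "m \<in> lattice_span (\<lambda>k j. if j = k then 1 else 0)"
  unfolding lattice_span_def
proof (intro CollectI exI[of _ m] ext)
  fix j
  show "m j = (\<Sum>k<3. m k * (if j = k then 1 else 0))"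
  proof (cases "j < 3")
    case True
    then have "j \<in> {0, 1, 2}" by auto
    moreover have "{..<3 :: nat} = {0, 1, 2}" by auto
    ultimately show ?thesis by auto
  qed (use assms in simp)
qed

theorem theorem1p3:
  fixes r :: nat
  assumes "r \<ge> 3"
  shows "\<exists>A \<subseteq> realtuple r. uncountable A \<and>
    (\<forall>\<alpha>\<in>A. Q_lin_indep r \<alpha> \<and>
       (\<exists>b. sublattice3_basis r b \<and>
          (\<exists>N. \<forall>m. best_approx r \<alpha> m \<and> maxnorm r m \<ge> N \<longrightarrow> m \<in> lattice_span b)))"
proof -
  have r: "0 < r" "2 \<le> r" using assms by auto
  define e :: "nat \<Rightarrow> nat \<Rightarrow> int" where "e k j = (if j = k then 1 else 0)" for k j
  have "range (alpha r) \<subseteq> realtuple r" by (auto simp: realtuple_def alpha_def)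
  moreover have "uncountable (range (alpha r))"
    using uncountable_UNIV_nat_set countable_image_inj_on inj_alpha[OF r(1)] by blast
  moreover have "Q_lin_indep r (alpha r S)" for S
    using linform_alpha_ne_0[OF r] by (rule Q_lin_indep_if_linform_ne_0)
  moreover have "sublattice3_basis r e"
    unfolding e_def by (rule sublattice3_basis_unit_vectors[OF r(2)])
  moreover have "m \<in> lattice_span e" if "best_approx r (alpha r S) m" "den r 0 \<le> maxnorm r m" for S m
    unfolding e_def using best_approx_alpha_high_coordinates[OF r(1) that]
    by (intro lattice_span_unit_vectors) blast
  ultimately show ?thesis by (intro exI[of _ "range (alpha r)"]) blast
qed

end
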